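(* Assume (F1) and (H1). Then every solution $(c,\varphi)$ of the travelling wave problem satisfies $0<\varphi(\xi)<K$ for all $\xi\in\mathbb{R}$.
   Context: Fix constants $d>0$, $\tau\geq0$, $K>0$, $f:[0,K]^2\to\mathbb{R}$ and $h:\mathbb{R}\to\mathbb{R}$ (partial derivatives of $f$ assumed to exist). (F1) $f\in C([0,K]^2,\mathbb{R})$, $f(0,0)=f(K,K)=0$, $f(u,u)>0$ for $u\in(0,K)$, $\partial_2f(u,v)\geq0$ on $[0,K]^2$. (H1) $h\ge0$, even, integrable, $\int_{\mathbb{R}}h=1$. Notation: $\Delta_1\varphi(\xi)=\varphi(\xi+1)-2\varphi(\xi)+\varphi(\xi-1)$, $(h*\varphi)(\xi)=\int_{\mathbb{R}}h(y)\varphi(\xi-y)dy$. A solution $(c,\varphi)$ of the travelling wave problem consists of $c>0$ and a differentiable $\varphi:\mathbb{R}\to\mathbb{R}$ with $-c\varphi'(\xi)+d\Delta_1\varphi(\xi)+f(\varphi(\xi),(h*\varphi)(\xi-c\tau))=0$ for all $\xi$, $\lim_{\xi\to-\infty}\varphi(\xi)=0$, $\lim_{\xi\to\infty}\varphi(\xi)=K$, and $0\le\varphi\le K$ on $\mathbb{R}$. *)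

theory Defs
  imports "HOL-Analysis.Analysis"
begin

definition conv :: "(real \<Rightarrow> real) \<Rightarrow> (real \<Rightarrow> real) \<Rightarrow> real \<Rightarrow> real" where
  "conv h \<phi> \<xi> = (LINT y|lborel. h y * \<phi> (\<xi> - y))"

definition Delta1 :: "(real \<Rightarrow> real) \<Rightarrow> real \<Rightarrow> real" where
  "Delta1 \<phi> \<xi> = \<phi> (\<xi> + 1) - 2 * \<phi> \<xi> + \<phi> (\<xi> - 1)"

definition tw_solution ::
  "real \<Rightarrow> real \<Rightarrow> real \<Rightarrow> (real \<Rightarrow> real \<Rightarrow> real) \<Rightarrow> (real \<Rightarrow> real)
     \<Rightarrow> real \<Rightarrow> (real \<Rightarrow> real) \<Rightarrow> bool" where
  "tw_solution d \<tau> K f h c \<phi> \<longleftrightarrow>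
     c > 0 \<and> (\<forall>\<xi>. \<phi> differentiable at \<xi>) \<and>
     (\<forall>\<xi>. - c * deriv \<phi> \<xi> + d * Delta1 \<phi> \<xi> + f (\<phi> \<xi>) (conv h \<phi> (\<xi> - c * \<tau>)) = 0) \<and>
     (\<phi> \<longlongrightarrow> 0) at_bot \<and> (\<phi> \<longlongrightarrow> K) at_top \<and>
     (\<forall>\<xi>. 0 \<le> \<phi> \<xi> \<and> \<phi> \<xi> \<le> K)"

end

theory Submission
  imports Defs
begin

text \<open>At a zero of \<open>\<phi>\<close> the derivative vanishes and \<open>f(0, h * \<phi>) \<ge> f(0, 0) = 0\<close> by
  quasi-monotonicity, so the equation forces \<open>\<Delta>\<^sub>1 \<phi> \<le> 0\<close>; as \<open>\<phi> \<ge> 0\<close> both neighbours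
  \<open>\<phi>(\<xi> \<pm> 1)\<close> vanish as well. Iterating, \<open>\<phi>\<close> vanishes on \<open>\<xi> + \<nat>\<close>, contradicting
  \<open>\<phi> \<rightarrow> K > 0\<close> at \<open>+\<infinity>\<close>. Symmetrically a point with \<open>\<phi> = K\<close> propagates to
  \<open>\<xi> - \<nat>\<close>, contradicting \<open>\<phi> \<rightarrow> 0\<close> at \<open>-\<infinity>\<close>.\<close>

lemma mono_on_if_nonneg_derivative_within:
  fixes g :: "real \<Rightarrow> real" and lo hi :: real
  assumes deriv_nonneg: "\<And>v. v \<in> {lo..hi} \<Longrightarrow>
             \<exists>D. (g has_real_derivative D) (at v within {lo..hi}) \<and> D \<ge> 0"
  shows "mono_on {lo..hi} g"
proof (rule mono_onI)
  fix a b assume ab: "a \<in> {lo..hi}" "b \<in> {lo..hi}" "a \<le> b"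
  show "g a \<le> g b"
  proof (rule DERIV_nonneg_imp_increasing_open[OF \<open>a \<le> b\<close>])
    fix x assume "a < x" "x < b"
    with ab have "x \<in> interior {lo..hi}" by auto
    with deriv_nonneg show "\<exists>D. DERIV g x :> D \<and> D \<ge> 0"
      by (metis at_within_interior interior_subset subsetD)
  next
    have "continuous_on {lo..hi} g"
      unfolding continuous_on_eq_continuous_within
      using deriv_nonneg DERIV_continuous by blast
    then show "continuous_on {a..b} g"
      by (rule continuous_on_subset) (use ab in auto)
  qed
qed

lemma conv_nonneg_le:
  fixes h \<phi> :: "real \<Rightarrow> real" and M x :: real
  assumes h_nonneg: "\<And>y. h y \<ge> 0" and h_int: "integrable lborel h"
    and h_one: "(LINT y|lborel. h y) = 1"
    and \<phi>_bounds: "\<And>y. 0 \<le> \<phi> y \<and> \<phi> y \<le> M"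
  shows "0 \<le> conv h \<phi> x \<and> conv h \<phi> x \<le> M"
proof
  show "0 \<le> conv h \<phi> x" unfolding conv_def
    by (rule integral_nonneg_AE) (use h_nonneg \<phi>_bounds in auto)
  have "0 \<le> M" using \<phi>_bounds order_trans by blast
  show "conv h \<phi> x \<le> M"
  proof (cases "integrable lborel (\<lambda>y. h y * \<phi> (x - y))")
    case True
    have "conv h \<phi> x \<le> (LINT y|lborel. M * h y)" unfolding conv_def
      by (rule integral_mono[OF True])
         (simp_all add: h_int, metis \<phi>_bounds h_nonneg mult.commute mult_left_mono)
    also have "\<dots> = M" using h_one by simp
    finally show ?thesis .
  next
    case False
    then show ?thesis unfolding conv_def using \<open>0 \<le> M\<close> not_integrable_integral_eq[OF False] by simp
  qed
qed

text \<open>In the next two lemmas \<open>r\<close> stands for the reaction term \<open>f(\<phi>(\<xi>), (h * \<phi>)(\<xi> - c\<tau>))\<close>.\<close>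

lemma neighbours_zero_at_zero_minimum:
  fixes \<phi> :: "real \<Rightarrow> real" and c d r \<xi> :: real
  assumes "d > 0" and nonneg: "\<And>x. 0 \<le> \<phi> x" and "\<phi> differentiable at \<xi>"
    and zero: "\<phi> \<xi> = 0" and "r \<ge> 0"
    and equation: "- c * deriv \<phi> \<xi> + d * Delta1 \<phi> \<xi> + r = 0"
  shows "\<phi> (\<xi> - 1) = 0 \<and> \<phi> (\<xi> + 1) = 0"
proof -
  have "deriv \<phi> \<xi> = 0"
  proof (rule DERIV_local_min[where d = 1])
    show "DERIV \<phi> \<xi> :> deriv \<phi> \<xi>"
      using \<open>\<phi> differentiable at \<xi>\<close> DERIV_deriv_iff_real_differentiable by blast
  qed (use zero nonneg in auto)
  with equation zero have "d * (\<phi> (\<xi> + 1) + \<phi> (\<xi> - 1)) = - r"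
    unfolding Delta1_def by (simp add: algebra_simps)
  with \<open>d > 0\<close> \<open>r \<ge> 0\<close> have "\<phi> (\<xi> + 1) + \<phi> (\<xi> - 1) \<le> 0"
    by (smt (verit) mult_pos_pos)
  with nonneg show ?thesis by (smt (verit))
qed

lemma neighbours_max_at_maximum:
  fixes \<phi> :: "real \<Rightarrow> real" and c d r K \<xi> :: real
  assumes "d > 0" and bounded: "\<And>x. \<phi> x \<le> K" and "\<phi> differentiable at \<xi>"
    and max: "\<phi> \<xi> = K" and "r \<le> 0"
    and equation: "- c * deriv \<phi> \<xi> + d * Delta1 \<phi> \<xi> + r = 0"
  shows "\<phi> (\<xi> - 1) = K \<and> \<phi> (\<xi> + 1) = K"
proof -
  have "((\<lambda>x. K - \<phi> x) has_real_derivative - deriv \<phi> \<xi>) (at \<xi>)"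
    using \<open>\<phi> differentiable at \<xi>\<close>
    by (auto intro!: derivative_eq_intros simp: DERIV_deriv_iff_real_differentiable)
  then have "(\<lambda>x. K - \<phi> x) differentiable at \<xi>" "deriv (\<lambda>x. K - \<phi> x) \<xi> = - deriv \<phi> \<xi>"
    by (auto simp: real_differentiable_def DERIV_imp_deriv)
  moreover have "Delta1 (\<lambda>x. K - \<phi> x) \<xi> = - Delta1 \<phi> \<xi>"
    unfolding Delta1_def by simp
  ultimately have "K - \<phi> (\<xi> - 1) = 0 \<and> K - \<phi> (\<xi> + 1) = 0"
    using neighbours_zero_at_zero_minimum[of d "\<lambda>x. K - \<phi> x" \<xi> "- r" c]
      \<open>d > 0\<close> bounded max \<open>r \<le> 0\<close> equation by (simp add: algebra_simps)
  then show ?thesis by simp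
qed

lemma value_not_attained_if_propagates_right:
  fixes \<phi> :: "real \<Rightarrow> real" and a L \<xi> :: real
  assumes step: "\<And>x. \<phi> x = a \<Longrightarrow> \<phi> (x + 1) = a"
    and lim: "(\<phi> \<longlongrightarrow> L) at_top" and "L \<noteq> a"
  shows "\<phi> \<xi> \<noteq> a"
proof
  assume "\<phi> \<xi> = a"
  then have on_orbit: "\<phi> (\<xi> + real n) = a" for n :: nat
  proof (induction n)
    case (Suc n)
    then show ?case using step[of "\<xi> + real n"] by (simp add: algebra_simps)
  qed simp
  from tendsto_imp_eventually_ne[OF lim \<open>L \<noteq> a\<close>]
  obtain X where "\<And>x. x \<ge> X \<Longrightarrow> \<phi> x \<noteq> a"
    unfolding eventually_at_top_linorder by blast
  moreover have "\<xi> + real (nat \<lceil>X - \<xi>\<rceil>) \<ge> X" by linarith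
  ultimately show False using on_orbit by blast
qed

lemma value_not_attained_if_propagates_left:
  fixes \<phi> :: "real \<Rightarrow> real" and a L \<xi> :: real
  assumes step: "\<And>x. \<phi> x = a \<Longrightarrow> \<phi> (x - 1) = a"
    and lim: "(\<phi> \<longlongrightarrow> L) at_bot" and "L \<noteq> a"
  shows "\<phi> \<xi> \<noteq> a"
proof -
  have "((\<lambda>x. \<phi> (- x)) \<longlongrightarrow> L) at_top"
    using lim by (simp add: filterlim_at_bot_mirror)
  moreover have "\<phi> (- (x + 1)) = a" if "\<phi> (- x) = a" for x
    using step[OF that] by (simp only: minus_add_distrib diff_conv_add_uminus)
  ultimately have "\<phi> (- (- \<xi>)) \<noteq> a"
    using value_not_attained_if_propagates_right[of "\<lambda>x. \<phi> (- x)" a L "- \<xi>"] \<open>L \<noteq> a\<close>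
    by blast
  then show ?thesis by simp
qed

theorem lemma3p1:
  fixes d \<tau> K :: real and f :: "real \<Rightarrow> real \<Rightarrow> real" and h :: "real \<Rightarrow> real"
    and c :: real and \<phi> :: "real \<Rightarrow> real"
  assumes d: "d > 0" and tau: "\<tau> \<ge> 0" and K: "K > 0"
    and F1_cont: "continuous_on ({0..K} \<times> {0..K}) (\<lambda>(u, v). f u v)"
    and F1_0: "f 0 0 = 0" and F1_K: "f K K = 0"
    and F1_pos: "\<And>u. 0 < u \<Longrightarrow> u < K \<Longrightarrow> f u u > 0"
    and F1_d1: "\<And>u v. u \<in> {0..K} \<Longrightarrow> v \<in> {0..K} \<Longrightarrow>
                  \<exists>D. ((\<lambda>x. f x v) has_real_derivative D) (at u within {0..K})"
    and F1_d2: "\<And>u v. u \<in> {0..K} \<Longrightarrow> v \<in> {0..K} \<Longrightarrow>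
                  \<exists>D. ((\<lambda>y. f u y) has_real_derivative D) (at v within {0..K}) \<and> D \<ge> 0"
    and H1_nonneg: "\<And>x. h x \<ge> 0" and H1_even: "\<And>x. h (- x) = h x"
    and H1_int: "integrable lborel h" and H1_one: "(LINT x|lborel. h x) = 1"
    and sol: "tw_solution d \<tau> K f h c \<phi>"
  shows "\<forall>\<xi>. 0 < \<phi> \<xi> \<and> \<phi> \<xi> < K"
proof -
  from sol have diff: "\<And>\<xi>. \<phi> differentiable at \<xi>"
    and eq: "\<And>\<xi>. - c * deriv \<phi> \<xi> + d * Delta1 \<phi> \<xi> + f (\<phi> \<xi>) (conv h \<phi> (\<xi> - c * \<tau>)) = 0"
    and lim_bot: "(\<phi> \<longlongrightarrow> 0) at_bot" and lim_top: "(\<phi> \<longlongrightarrow> K) at_top"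
    and bounds: "\<And>\<xi>. 0 \<le> \<phi> \<xi> \<and> \<phi> \<xi> \<le> K"
    unfolding tw_solution_def by blast+
  have conv: "conv h \<phi> x \<in> {0..K}" for x
    using conv_nonneg_le[OF H1_nonneg H1_int H1_one bounds] by simp
  have f_mono: "mono_on {0..K} (f u)" if "u \<in> {0..K}" for u
    by (rule mono_on_if_nonneg_derivative_within) (use F1_d2 that in blast)
  have zero_step: "\<phi> (\<xi> + 1) = 0" if zero: "\<phi> \<xi> = 0" for \<xi>
  proof -
    have "f 0 0 \<le> f 0 (conv h \<phi> (\<xi> - c * \<tau>))"
      by (rule mono_onD[OF f_mono]) (use K conv in auto)
    then show ?thesis
      using neighbours_zero_at_zero_minimum[OF d _ diff zero _ eq] bounds zero F1_0 by simp
  qed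
  have not_zero: "\<phi> \<xi> \<noteq> 0" for \<xi>
    using value_not_attained_if_propagates_right[OF zero_step lim_top] K by simp
  have max_step: "\<phi> (\<xi> - 1) = K" if max: "\<phi> \<xi> = K" for \<xi>
  proof -
    have "f K (conv h \<phi> (\<xi> - c * \<tau>)) \<le> f K K"
      by (rule mono_onD[OF f_mono]) (use K conv in auto)
    then show ?thesis
      using neighbours_max_at_maximum[OF d _ diff max _ eq] bounds max F1_K by simp
  qed
  have not_K: "\<phi> \<xi> \<noteq> K" for \<xi>
    using value_not_attained_if_propagates_left[OF max_step lim_bot] K by simp
  show ?thesis using bounds not_zero not_K by (simp add: order_le_neq_trans)
qed

end
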